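(* For $\psi\in X_U$, let $G_\psi(u)=u-\psi(u)$, $u>0$; then $G_\psi$ is a bijection $(0,\infty)\to\mathbb R$, and setting $$\Phi_U(\psi)(v)=\frac{-\psi'(G_\psi^{-1}(v))}{1-\psi'(G_\psi^{-1}(v))},\qquad v\in\mathbb R,$$ the map $\Phi_U$ is a bijection from $X_U$ onto $Y_U$. Its inverse is $\Psi_U(\rho)(u)=\zeta^+_\rho\big((\zeta^-_\rho)^{-1}(u)\big)$, $u>0$, where $\zeta^-_\rho(v)=\int_{-\infty}^v(1-\rho(v'))dv'$ and $\zeta^+_\rho(v)=\int_v^\infty\rho(v')dv'$ (both bijections $\mathbb R\to(0,\infty)$).
   Context: $X_U$ is the set of $C^1$ functions $\psi:(0,\infty)\to(0,\infty)$ with $\psi'<0$, $\lim_{u\downarrow0}\psi(u)=\infty$, $\lim_{u\uparrow\infty}\psi(u)=0$. $Y_U$ is the set of continuous $\rho:\mathbb R\to(0,1)$ with $\int_{-\infty}^0(1-\rho(v))dv=\int_0^\infty\rho(v)dv<\infty$. *)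

theory Defs
  imports "HOL-Analysis.Analysis"
begin

text \<open>Functions on (0,oo) are represented as total functions real => real,
  normalised (extensional convention) to take the value 0 outside (0,oo).\<close>

definition X_U :: "(real \<Rightarrow> real) set" where
  "X_U = {\<psi>. (\<exists>\<psi>'. (\<forall>u>0. (\<psi> has_real_derivative \<psi>' u) (at u))
                     \<and> continuous_on {0<..} \<psi>'
                     \<and> (\<forall>u>0. \<psi>' u < 0))
            \<and> (\<forall>u>0. \<psi> u > 0)
            \<and> filterlim \<psi> at_top (at_right 0)
            \<and> (\<psi> \<longlongrightarrow> 0) at_top
            \<and> (\<forall>u\<le>0. \<psi> u = 0)}"

definition Y_U :: "(real \<Rightarrow> real) set" where
  "Y_U = {\<rho>. continuous_on UNIV \<rho>
            \<and> (\<forall>v. 0 < \<rho> v \<and> \<rho> v < 1)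
            \<and> set_integrable lborel {..0} (\<lambda>v. 1 - \<rho> v)
            \<and> set_integrable lborel {0..} \<rho>
            \<and> (LINT v:{..0}|lborel. 1 - \<rho> v) = (LINT v:{0..}|lborel. \<rho> v)}"

definition G :: "(real \<Rightarrow> real) \<Rightarrow> real \<Rightarrow> real" where
  "G \<psi> u = u - \<psi> u"

definition Phi_U :: "(real \<Rightarrow> real) \<Rightarrow> real \<Rightarrow> real" where
  "Phi_U \<psi> v = (let w = the_inv_into {0<..} (G \<psi>) v
                 in - deriv \<psi> w / (1 - deriv \<psi> w))"

definition zeta_minus :: "(real \<Rightarrow> real) \<Rightarrow> real \<Rightarrow> real" where
  "zeta_minus \<rho> v = (LINT v':{..v}|lborel. 1 - \<rho> v')"

definition zeta_plus :: "(real \<Rightarrow> real) \<Rightarrow> real \<Rightarrow> real" where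
  "zeta_plus \<rho> v = (LINT v':{v..}|lborel. \<rho> v')"

definition Psi_U :: "(real \<Rightarrow> real) \<Rightarrow> real \<Rightarrow> real" where
  "Psi_U \<rho> u = (if u > 0 then zeta_plus \<rho> (the_inv_into UNIV (zeta_minus \<rho>) u) else 0)"

end

theory Submission
  imports Defs
begin

text \<open>
  For \<open>\<rho> \<in> Y_U\<close> the functions \<open>\<zeta>\<^sup>-\<close>, \<open>\<zeta>\<^sup>+\<close> are differentiable with derivatives
  \<open>1 - \<rho>\<close> and \<open>-\<rho>\<close>, tend to 0 at \<open>-\<infinity>\<close> resp. \<open>+\<infinity>\<close>, and the balance condition of \<open>Y_U\<close>
  gives the key identity \<open>\<zeta>\<^sup>-(v) - \<zeta>\<^sup>+(v) = v\<close>.  Hence both are monotone bijections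
  \<open>\<real> \<rightarrow> (0,\<infinity>)\<close>, and \<open>\<Psi>(u) = \<zeta>\<^sup>+(k(u)) = u - k(u)\<close> with \<open>k = (\<zeta>\<^sup>-)\<^sup>-\<^sup>1\<close>, whose
  derivative \<open>-\<rho>(k u)/(1 - \<rho>(k u))\<close> shows \<open>\<Psi> \<in> X_U\<close> and \<open>\<Phi>(\<Psi>(\<rho>)) = \<rho>\<close>.
  Conversely, for \<open>\<psi> \<in> X_U\<close> the map \<open>G = id - \<psi>\<close> is a strictly increasing bijection
  \<open>(0,\<infinity>) \<rightarrow> \<real>\<close>; with \<open>h = G\<^sup>-\<^sup>1\<close> one has \<open>h' = 1 - \<Phi>(\<psi>)\<close> and \<open>(\<psi> \<circ> h)' = -\<Phi>(\<psi>)\<close>, so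
  improper fundamental-theorem-of-calculus arguments identify \<open>\<zeta>\<^sup>-\<close> and \<open>\<zeta>\<^sup>+\<close> of \<open>\<Phi>(\<psi>)\<close>
  as \<open>h\<close> and \<open>\<psi> \<circ> h\<close>; this yields \<open>\<Phi>(\<psi>) \<in> Y_U\<close> and \<open>\<Psi>(\<Phi>(\<psi>)) = \<psi>\<close>.
\<close>

subsection \<open>Integrals of continuous functions over half-lines\<close>

lemma set_integral_insert_point:
  fixes f :: "real \<Rightarrow> real"
  assumes f: "f \<in> borel_measurable borel" and A: "A \<in> sets borel"
  shows "set_integrable lborel (insert v A) f \<longleftrightarrow> set_integrable lborel A f"
    and "(LINT x:insert v A|lborel. f x) = (LINT x:A|lborel. f x)"
proof -
  have ae: "AE x in lborel. indicator (insert v A) x *\<^sub>R f x = indicator A x *\<^sub>R f x"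
    using AE_lborel_singleton[of v] by eventually_elim (auto split: split_indicator)
  show "set_integrable lborel (insert v A) f \<longleftrightarrow> set_integrable lborel A f"
    unfolding set_integrable_def using f A ae by (intro integrable_cong_AE) auto
  show "(LINT x:insert v A|lborel. f x) = (LINT x:A|lborel. f x)"
    unfolding set_lebesgue_integral_def using f A ae by (intro integral_cong_AE) auto
qed

lemma FTC_Iic_nonneg:
  fixes f F :: "real \<Rightarrow> real"
  assumes cont: "continuous_on UNIV f" and D: "\<And>x. x < v \<Longrightarrow> DERIV F x :> f x"
    and nonneg: "\<And>x. x < v \<Longrightarrow> 0 \<le> f x" and lim_bot: "(F \<longlongrightarrow> A) at_bot"
    and lim_v: "(F \<longlongrightarrow> F v) (at_left v)"
  shows "set_integrable lborel {..v} f" and "(LINT x:{..v}|lborel. f x) = F v - A"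
proof -
  have ic: "isCont f x" for x using cont by (simp add: continuous_on_eq_continuous_at)
  have "((F \<circ> real_of_ereal) \<longlongrightarrow> A) (at_right (- \<infinity>))"
       "((F \<circ> real_of_ereal) \<longlongrightarrow> F v) (at_left (ereal v))"
    using lim_bot lim_v by (simp_all add: ereal_tendsto_simps1)
  with interval_integral_FTC_nonneg[of "-\<infinity>" "ereal v" F f A "F v"] D ic nonneg
  have "set_integrable lborel {..<v} f" "(LINT x:{..<v}|lborel. f x) = F v - A"
    by (auto simp: interval_lebesgue_integral_def)
  moreover have "{..v} = insert v {..<v}" by auto
  ultimately show "set_integrable lborel {..v} f" "(LINT x:{..v}|lborel. f x) = F v - A"
    using set_integral_insert_point[OF borel_measurable_continuous_onI[OF cont], of "{..<v}" v]
    by auto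
qed

lemma FTC_Ici_nonneg:
  fixes f F :: "real \<Rightarrow> real"
  assumes cont: "continuous_on UNIV f" and D: "\<And>x. v < x \<Longrightarrow> DERIV F x :> f x"
    and nonneg: "\<And>x. v < x \<Longrightarrow> 0 \<le> f x" and lim_top: "(F \<longlongrightarrow> B) at_top"
    and lim_v: "(F \<longlongrightarrow> F v) (at_right v)"
  shows "set_integrable lborel {v..} f" and "(LINT x:{v..}|lborel. f x) = B - F v"
proof -
  have ic: "isCont f x" for x using cont by (simp add: continuous_on_eq_continuous_at)
  have "((F \<circ> real_of_ereal) \<longlongrightarrow> B) (at_left \<infinity>)"
       "((F \<circ> real_of_ereal) \<longlongrightarrow> F v) (at_right (ereal v))"
    using lim_top lim_v by (simp_all add: ereal_tendsto_simps1)
  with interval_integral_FTC_nonneg[of "ereal v" "\<infinity>" F f "F v" B] D ic nonneg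
  have "set_integrable lborel {v<..} f" "(LINT x:{v<..}|lborel. f x) = B - F v"
    by (auto simp: interval_lebesgue_integral_def)
  moreover have "{v..} = insert v {v<..}" by auto
  ultimately show "set_integrable lborel {v..} f" "(LINT x:{v..}|lborel. f x) = B - F v"
    using set_integral_insert_point[OF borel_measurable_continuous_onI[OF cont], of "{v<..}" v]
    by auto
qed

lemma continuous_has_antiderivative:
  fixes f :: "real \<Rightarrow> real"
  assumes cont: "continuous_on UNIV f"
  obtains F where "\<And>x. DERIV F x :> f x"
proof -
  have "isCont f x" for x using cont by (simp add: continuous_on_eq_continuous_at)
  then obtain F where "\<forall>x::real. -\<infinity> < x \<longrightarrow> x < \<infinity> \<longrightarrow> (F has_vector_derivative f x) (at x)"
    using einterval_antiderivative[of "-\<infinity>" "\<infinity>" f] by auto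
  then have "\<And>x. DERIV F x :> f x" by (simp add: has_real_derivative_iff_has_vector_derivative)
  then show ?thesis using that by blast
qed

lemma FTC_Icc:
  fixes f F :: "real \<Rightarrow> real"
  assumes cont: "continuous_on UNIV f" and D: "\<And>x. DERIV F x :> f x" and "a \<le> b"
  shows "(LINT x:{a..b}|lborel. f x) = F b - F a"
  unfolding set_lebesgue_integral_def
  by (rule integral_FTC_atLeastAtMost[OF \<open>a \<le> b\<close>])
     (auto intro: DERIV_subset[OF D] continuous_on_subset[OF cont]
       simp: has_real_derivative_iff_has_vector_derivative[symmetric])

lemma integral_Iic_antiderivative:
  fixes f :: "real \<Rightarrow> real"
  assumes cont: "continuous_on UNIV f" and int: "set_integrable lborel {..0} f"
  obtains F L where "\<And>x. DERIV F x :> f x" "(F \<longlongrightarrow> L) at_bot"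
    "\<And>v. (LINT x:{..v}|lborel. f x) = F v - L"
proof -
  obtain F where D: "\<And>x. DERIV F x :> f x" using continuous_has_antiderivative[OF cont] by blast
  have int_v: "set_integrable lborel {..v} f" for v
  proof (cases "v \<le> 0")
    case True then show ?thesis by (intro set_integrable_subset[OF int]) auto
  next
    case False
    then have "{..v} = {..0} \<union> {0..v}" by auto
    moreover have "set_integrable lborel {0..v} f"
      by (intro borel_integrable_atLeastAtMost' continuous_on_subset[OF cont]) auto
    ultimately show ?thesis using int by (auto intro: set_integrable_Un)
  qed
  have lim: "(F \<longlongrightarrow> F b - (LINT x:{..b}|lborel. f x)) at_bot" for b
  proof -
    have "((\<lambda>a. F b - (LINT x:{a..b}|lborel. f x)) \<longlongrightarrow> F b - (LINT x:{..b}|lborel. f x)) at_bot"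
      by (intro tendsto_intros tendsto_set_lebesgue_integral_at_bot int_v) auto
    moreover have "eventually (\<lambda>a. F b - (LINT x:{a..b}|lborel. f x) = F a) at_bot"
      using eventually_le_at_bot[of b] by eventually_elim (simp add: FTC_Icc[OF cont D])
    ultimately show ?thesis by (rule Lim_transform_eventually)
  qed
  define L where "L = F 0 - (LINT x:{..0}|lborel. f x)"
  have "F v - (LINT x:{..v}|lborel. f x) = L" for v
    unfolding L_def by (rule tendsto_unique[OF _ lim lim]) simp
  then show ?thesis using that[OF D lim[of 0, folded L_def]] by (auto simp: algebra_simps)
qed

lemma integral_Iic_deriv_tendsto:
  fixes f :: "real \<Rightarrow> real"
  assumes "continuous_on UNIV f" and "set_integrable lborel {..0} f"
  shows "DERIV (\<lambda>v. LINT x:{..v}|lborel. f x) x :> f x"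
    and "((\<lambda>v. LINT x:{..v}|lborel. f x) \<longlongrightarrow> 0) at_bot"
proof -
  obtain F L where F: "\<And>x. DERIV F x :> f x" "(F \<longlongrightarrow> L) at_bot"
    and eq: "\<And>v. (LINT x:{..v}|lborel. f x) = F v - L"
    using integral_Iic_antiderivative[OF assms] by blast
  have "DERIV (\<lambda>v. F v - L) x :> f x - 0" "((\<lambda>v. F v - L) \<longlongrightarrow> L - L) at_bot"
    by (intro derivative_intros tendsto_intros F)+
  then show "DERIV (\<lambda>v. LINT x:{..v}|lborel. f x) x :> f x"
    and "((\<lambda>v. LINT x:{..v}|lborel. f x) \<longlongrightarrow> 0) at_bot"
    by (simp_all add: eq)
qed

lemma integral_Ici_antiderivative:
  fixes f :: "real \<Rightarrow> real"
  assumes cont: "continuous_on UNIV f" and int: "set_integrable lborel {0..} f"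
  obtains F R where "\<And>x. DERIV F x :> f x" "(F \<longlongrightarrow> R) at_top"
    "\<And>v. (LINT x:{v..}|lborel. f x) = R - F v"
proof -
  obtain F where D: "\<And>x. DERIV F x :> f x" using continuous_has_antiderivative[OF cont] by blast
  have int_v: "set_integrable lborel {v..} f" for v
  proof (cases "0 \<le> v")
    case True then show ?thesis by (intro set_integrable_subset[OF int]) auto
  next
    case False
    then have "{v..} = {v..0} \<union> {0..}" by auto
    moreover have "set_integrable lborel {v..0} f"
      by (intro borel_integrable_atLeastAtMost' continuous_on_subset[OF cont]) auto
    ultimately show ?thesis using int by (auto intro: set_integrable_Un)
  qed
  have lim: "(F \<longlongrightarrow> F a + (LINT x:{a..}|lborel. f x)) at_top" for a
  proof -
    have "((\<lambda>b. F a + (LINT x:{a..b}|lborel. f x)) \<longlongrightarrow> F a + (LINT x:{a..}|lborel. f x)) at_top"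
      by (intro tendsto_intros tendsto_set_lebesgue_integral_at_top int_v) auto
    moreover have "eventually (\<lambda>b. F a + (LINT x:{a..b}|lborel. f x) = F b) at_top"
      using eventually_ge_at_top[of a] by eventually_elim (simp add: FTC_Icc[OF cont D])
    ultimately show ?thesis by (rule Lim_transform_eventually)
  qed
  define R where "R = F 0 + (LINT x:{0..}|lborel. f x)"
  have "F v + (LINT x:{v..}|lborel. f x) = R" for v
    unfolding R_def by (rule tendsto_unique[OF _ lim lim]) simp
  then show ?thesis using that[OF D lim[of 0, folded R_def]] by (auto simp: algebra_simps)
qed

lemma integral_Ici_deriv_tendsto:
  fixes f :: "real \<Rightarrow> real"
  assumes "continuous_on UNIV f" and "set_integrable lborel {0..} f"
  shows "DERIV (\<lambda>v. LINT x:{v..}|lborel. f x) x :> - f x"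
    and "((\<lambda>v. LINT x:{v..}|lborel. f x) \<longlongrightarrow> 0) at_top"
proof -
  obtain F R where F: "\<And>x. DERIV F x :> f x" "(F \<longlongrightarrow> R) at_top"
    and eq: "\<And>v. (LINT x:{v..}|lborel. f x) = R - F v"
    using integral_Ici_antiderivative[OF assms] by blast
  have "DERIV (\<lambda>v. R - F v) x :> 0 - f x" "((\<lambda>v. R - F v) \<longlongrightarrow> R - R) at_top"
    by (intro derivative_intros tendsto_intros F)+
  then show "DERIV (\<lambda>v. LINT x:{v..}|lborel. f x) x :> - f x"
    and "((\<lambda>v. LINT x:{v..}|lborel. f x) \<longlongrightarrow> 0) at_top"
    by (simp_all add: eq)
qed

lemma bij_betw_UNIV_positive:
  fixes f :: "real \<Rightarrow> real"
  assumes cont: "\<And>x. isCont f x" and inj: "inj f" and pos: "\<And>x. f x > 0"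
    and straddle: "\<And>u. u > 0 \<Longrightarrow> \<exists>a b. f a \<le> u \<and> u \<le> f b"
  shows "bij_betw f UNIV {0<..}"
  unfolding bij_betw_def
proof (intro conjI inj subset_antisym)
  show "range f \<subseteq> {0<..}" using pos by auto
  show "{0<..} \<subseteq> range f"
  proof
    fix u :: real assume "u \<in> {0<..}"
    then obtain a b where ab: "f a \<le> u" "u \<le> f b" using straddle by force
    show "u \<in> range f"
    proof (cases "a \<le> b")
      case True with IVT[of f a u b] ab cont show ?thesis by auto
    next
      case False with IVT2[of f a u b] ab cont show ?thesis by auto
    qed
  qed
qed

subsection \<open>From \<open>Y_U\<close> to \<open>X_U\<close>\<close>

context
  fixes \<rho> :: "real \<Rightarrow> real"
  assumes Y: "\<rho> \<in> Y_U"
begin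

lemma Y_cont: "continuous_on UNIV \<rho>"
  and Y_bounds: "0 < \<rho> v" "\<rho> v < 1"
  using Y by (auto simp: Y_U_def)

lemma zeta_minus_deriv: "DERIV (zeta_minus \<rho>) x :> 1 - \<rho> x"
  and zeta_minus_tendsto: "(zeta_minus \<rho> \<longlongrightarrow> 0) at_bot"
proof -
  have "continuous_on UNIV (\<lambda>v. 1 - \<rho> v)" using Y_cont by (intro continuous_intros)
  moreover have "set_integrable lborel {..0} (\<lambda>v. 1 - \<rho> v)" using Y by (simp add: Y_U_def)
  ultimately show "DERIV (zeta_minus \<rho>) x :> 1 - \<rho> x" "(zeta_minus \<rho> \<longlongrightarrow> 0) at_bot"
    using integral_Iic_deriv_tendsto by (simp_all add: zeta_minus_def[abs_def])
qed

lemma zeta_plus_deriv: "DERIV (zeta_plus \<rho>) x :> - \<rho> x"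
  and zeta_plus_tendsto: "(zeta_plus \<rho> \<longlongrightarrow> 0) at_top"
proof -
  have "set_integrable lborel {0..} \<rho>" using Y by (simp add: Y_U_def)
  then show "DERIV (zeta_plus \<rho>) x :> - \<rho> x" "(zeta_plus \<rho> \<longlongrightarrow> 0) at_top"
    using integral_Ici_deriv_tendsto[OF Y_cont] by (simp_all add: zeta_plus_def[abs_def])
qed

text \<open>The key identity: \<open>\<zeta>\<^sup>- - \<zeta>\<^sup>+\<close> has derivative \<open>1\<close> and vanishes at \<open>0\<close> by the balance
  condition built into \<open>Y_U\<close>.\<close>

lemma zeta_minus_minus_plus: "zeta_minus \<rho> v - zeta_plus \<rho> v = v"
proof -
  have "DERIV (\<lambda>v. zeta_minus \<rho> v - zeta_plus \<rho> v - v) x :> (1 - \<rho> x) - (- \<rho> x) - 1" for x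
    by (intro derivative_intros zeta_minus_deriv zeta_plus_deriv)
  then have "zeta_minus \<rho> v - zeta_plus \<rho> v - v = zeta_minus \<rho> 0 - zeta_plus \<rho> 0 - 0"
    by (intro DERIV_isconst_all) simp
  moreover have "zeta_minus \<rho> 0 = zeta_plus \<rho> 0"
    using Y by (simp add: Y_U_def zeta_minus_def zeta_plus_def)
  ultimately show ?thesis by simp
qed

lemma zeta_minus_strict_mono: "a < b \<Longrightarrow> zeta_minus \<rho> a < zeta_minus \<rho> b"
proof (rule DERIV_pos_imp_increasing[where f="zeta_minus \<rho>"])
  fix x show "\<exists>y. DERIV (zeta_minus \<rho>) x :> y \<and> y > 0"
    using zeta_minus_deriv[of x] Y_bounds(2)[of x] by (intro exI[of _ "1 - \<rho> x"]) simp
qed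

lemma zeta_plus_strict_antimono: "a < b \<Longrightarrow> zeta_plus \<rho> b < zeta_plus \<rho> a"
proof (rule DERIV_neg_imp_decreasing[where f="zeta_plus \<rho>"])
  fix x show "\<exists>y. DERIV (zeta_plus \<rho>) x :> y \<and> y < 0"
    using zeta_plus_deriv[of x] Y_bounds(1)[of x] by (intro exI[of _ "- \<rho> x"]) simp
qed

lemma zeta_minus_le_iff: "zeta_minus \<rho> a \<le> zeta_minus \<rho> b \<longleftrightarrow> a \<le> b"
  by (metis linorder_not_le order_less_imp_le order_le_less zeta_minus_strict_mono)

text \<open>Positivity follows from monotonicity and the limit \<open>0\<close> at the respective end.\<close>

lemma zeta_minus_pos: "zeta_minus \<rho> v > 0"
proof -
  have "0 \<le> zeta_minus \<rho> (v - 1)"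
    by (rule tendsto_upperbound[OF zeta_minus_tendsto])
       (use eventually_le_at_bot[of "v - 1"] in \<open>auto elim!: eventually_mono simp: zeta_minus_le_iff\<close>)
  also have "\<dots> < zeta_minus \<rho> v" by (rule zeta_minus_strict_mono) simp
  finally show ?thesis .
qed

lemma zeta_plus_pos: "zeta_plus \<rho> v > 0"
proof -
  have "0 \<le> zeta_plus \<rho> (v + 1)"
    by (rule tendsto_upperbound[OF zeta_plus_tendsto])
       (use eventually_ge_at_top[of "v + 1"] in
         \<open>auto elim!: eventually_mono intro: less_imp_le zeta_plus_strict_antimono simp: le_less\<close>)
  also have "\<dots> < zeta_plus \<rho> v" by (rule zeta_plus_strict_antimono) simp
  finally show ?thesis .
qed

text \<open>Both \<open>\<zeta>\<^sup>\<pm>\<close> are bijections \<open>\<real> \<rightarrow> (0,\<infinity>)\<close>: small values come from the limit \<open>0\<close>,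
  large values from the identity \<open>\<zeta>\<^sup>- - \<zeta>\<^sup>+ = id\<close>.\<close>

lemma zeta_minus_bij: "bij_betw (zeta_minus \<rho>) UNIV {0<..}"
proof (rule bij_betw_UNIV_positive)
  show "isCont (zeta_minus \<rho>) x" for x using zeta_minus_deriv by (rule DERIV_isCont)
  show "inj (zeta_minus \<rho>)" by (rule injI) (metis less_irrefl linorder_neqE zeta_minus_strict_mono)
  fix u :: real assume u: "u > 0"
  from order_tendstoD(2)[OF zeta_minus_tendsto u] obtain a where "zeta_minus \<rho> a < u"
    by (auto simp: eventually_at_bot_linorder)
  moreover have "u \<le> zeta_minus \<rho> u"
    using zeta_minus_minus_plus[of u] zeta_plus_pos[of u] by linarith
  ultimately show "\<exists>a b. zeta_minus \<rho> a \<le> u \<and> u \<le> zeta_minus \<rho> b" by (meson less_imp_le)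
qed (rule zeta_minus_pos)

lemma zeta_plus_bij: "bij_betw (zeta_plus \<rho>) UNIV {0<..}"
proof (rule bij_betw_UNIV_positive)
  show "isCont (zeta_plus \<rho>) x" for x using zeta_plus_deriv by (rule DERIV_isCont)
  show "inj (zeta_plus \<rho>)"
    by (rule injI) (metis less_irrefl linorder_neqE zeta_plus_strict_antimono)
  fix u :: real assume u: "u > 0"
  from order_tendstoD(2)[OF zeta_plus_tendsto u] obtain a where "zeta_plus \<rho> a < u"
    by (auto simp: eventually_at_top_linorder)
  moreover have "u \<le> zeta_plus \<rho> (- u)"
    using zeta_minus_minus_plus[of "- u"] zeta_minus_pos[of "- u"] by linarith
  ultimately show "\<exists>a b. zeta_plus \<rho> a \<le> u \<and> u \<le> zeta_plus \<rho> b" by (meson less_imp_le)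
qed (rule zeta_plus_pos)

definition zeta_minus_inv :: "real \<Rightarrow> real" where
  "zeta_minus_inv = the_inv_into UNIV (zeta_minus \<rho>)"

lemma zeta_minus_inv_eq: "u > 0 \<Longrightarrow> zeta_minus \<rho> (zeta_minus_inv u) = u"
  unfolding zeta_minus_inv_def using zeta_minus_bij
  by (intro f_the_inv_into_f) (auto simp: bij_betw_def)

lemma zeta_minus_inv_zeta_minus: "zeta_minus_inv (zeta_minus \<rho> v) = v"
  unfolding zeta_minus_inv_def using zeta_minus_bij
  by (intro the_inv_into_f_f) (auto simp: bij_betw_def)

lemma Psi_U_eq: "u > 0 \<Longrightarrow> Psi_U \<rho> u = u - zeta_minus_inv u"
  using zeta_minus_minus_plus[of "zeta_minus_inv u"] zeta_minus_inv_eq[of u]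
  by (simp add: Psi_U_def zeta_minus_inv_def[symmetric])

lemma zeta_minus_inv_isCont: "u > 0 \<Longrightarrow> isCont zeta_minus_inv u"
  using isCont_inverse_function[of 1 "zeta_minus_inv u" zeta_minus_inv "zeta_minus \<rho>"]
    zeta_minus_inv_zeta_minus zeta_minus_inv_eq[of u] DERIV_isCont[OF zeta_minus_deriv]
  by simp

lemma zeta_minus_inv_deriv:
  "u > 0 \<Longrightarrow> DERIV zeta_minus_inv u :> inverse (1 - \<rho> (zeta_minus_inv u))"
  by (rule DERIV_inverse_function[where f="zeta_minus \<rho>" and a=0 and b="u+1"])
     (use zeta_minus_deriv Y_bounds(2)[of "zeta_minus_inv u"] zeta_minus_inv_eq
        zeta_minus_inv_isCont in auto)

text \<open>The derivative of \<open>\<Psi>(\<rho>)\<close>: \<open>1 - 1/(1 - \<rho>(k u)) = -\<rho>(k u)/(1 - \<rho>(k u))\<close>.\<close>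

definition Psi_deriv :: "real \<Rightarrow> real" where
  "Psi_deriv u = - \<rho> (zeta_minus_inv u) / (1 - \<rho> (zeta_minus_inv u))"

lemma Psi_U_has_deriv: "u > 0 \<Longrightarrow> DERIV (Psi_U \<rho>) u :> Psi_deriv u"
proof -
  assume u: "u > 0"
  have "DERIV (\<lambda>u. u - zeta_minus_inv u) u :> 1 - inverse (1 - \<rho> (zeta_minus_inv u))"
    by (intro derivative_intros zeta_minus_inv_deriv u)
  also have "1 - inverse (1 - \<rho> (zeta_minus_inv u)) = Psi_deriv u"
    using Y_bounds(2)[of "zeta_minus_inv u"] by (simp add: Psi_deriv_def field_simps)
  finally show ?thesis
    by (rule has_field_derivative_transform_within_open[where S="{0<..}"])
       (use u Psi_U_eq in auto)
qed

lemma Psi_deriv_neg: "Psi_deriv u < 0"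
  using Y_bounds[of "zeta_minus_inv u"] by (simp add: Psi_deriv_def divide_neg_pos)

lemma Psi_deriv_cont: "continuous_on {0<..} Psi_deriv"
proof -
  have "continuous_on {0<..} zeta_minus_inv"
    by (intro continuous_at_imp_continuous_on ballI zeta_minus_inv_isCont) auto
  then have "continuous_on {0<..} (\<lambda>u. \<rho> (zeta_minus_inv u))"
    by (rule continuous_on_compose2[OF Y_cont]) auto
  then show ?thesis
    unfolding Psi_deriv_def using Y_bounds(2) by (intro continuous_intros) (auto simp: less_le)
qed

lemma zeta_minus_inv_at_right_0: "filterlim zeta_minus_inv at_bot (at_right 0)"
  unfolding filterlim_at_bot
proof
  fix Z :: real
  have "eventually (\<lambda>u. 0 < u \<and> u \<le> zeta_minus \<rho> Z) (at_right 0)"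
    using zeta_minus_pos[of Z] by (auto simp: eventually_at_right_field intro!: exI[of _ "zeta_minus \<rho> Z"])
  then show "eventually (\<lambda>u. zeta_minus_inv u \<le> Z) (at_right 0)"
    by eventually_elim (metis zeta_minus_inv_eq zeta_minus_le_iff)
qed

lemma zeta_minus_inv_at_top: "filterlim zeta_minus_inv at_top at_top"
  unfolding filterlim_at_top
proof
  fix Z :: real
  show "eventually (\<lambda>u. Z \<le> zeta_minus_inv u) at_top"
    using eventually_ge_at_top[of "zeta_minus \<rho> Z"]
    by eventually_elim (metis zeta_minus_inv_eq zeta_minus_le_iff zeta_minus_pos order_less_le_trans)
qed

lemma zeta_plus_at_bot: "filterlim (zeta_plus \<rho>) at_top at_bot"
proof (rule filterlim_at_top_mono[OF filterlim_uminus_at_top_at_bot])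
  show "\<forall>\<^sub>F v in at_bot. - v \<le> zeta_plus \<rho> v"
    using zeta_minus_minus_plus zeta_minus_pos by (intro always_eventually) (smt (verit))
qed

lemma Psi_U_in_X: "Psi_U \<rho> \<in> X_U"
  unfolding X_U_def
proof (intro CollectI conjI exI[of _ Psi_deriv] allI impI)
  show "DERIV (Psi_U \<rho>) u :> Psi_deriv u" if "u > 0" for u using Psi_U_has_deriv that .
  have Psi_eq: "eventually (\<lambda>u. zeta_plus \<rho> (zeta_minus_inv u) = Psi_U \<rho> u) F"
    if "eventually (\<lambda>u. u > 0) F" for F :: "real filter"
    using that by eventually_elim (simp add: Psi_U_def zeta_minus_inv_def)
  show "filterlim (Psi_U \<rho>) at_top (at_right 0)"
    using filterlim_compose[OF zeta_plus_at_bot zeta_minus_inv_at_right_0]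
      filterlim_cong[OF refl refl Psi_eq[OF eventually_at_right_less]] by simp
  show "(Psi_U \<rho> \<longlongrightarrow> 0) at_top"
    using filterlim_compose[OF zeta_plus_tendsto zeta_minus_inv_at_top]
      filterlim_cong[OF refl refl Psi_eq[OF eventually_gt_at_top]] by simp
qed (auto simp: Psi_U_def zeta_plus_pos Psi_deriv_neg Psi_deriv_cont)

text \<open>On \<open>(0,\<infinity>)\<close>, \<open>G(\<Psi>(\<rho>)) = k\<close>, so \<open>G\<^sup>-\<^sup>1 = \<zeta>\<^sup>-\<close> and \<open>\<Phi>\<close> recovers \<open>\<rho>\<close> from \<open>\<Psi>'(\<zeta>\<^sup>-(v))\<close>.\<close>

lemma Phi_U_Psi_U: "Phi_U (Psi_U \<rho>) = \<rho>"
proof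
  fix v
  have G_eq: "G (Psi_U \<rho>) u = zeta_minus_inv u" if "u > 0" for u
    using Psi_U_eq[OF that] by (simp add: G_def)
  have "inj_on (G (Psi_U \<rho>)) {0<..}"
    by (rule inj_onI) (metis G_eq greaterThan_iff zeta_minus_inv_eq)
  then have G_inv: "the_inv_into {0<..} (G (Psi_U \<rho>)) v = zeta_minus \<rho> v"
    by (rule the_inv_into_f_eq) (use G_eq zeta_minus_pos zeta_minus_inv_zeta_minus in auto)
  have deriv_eq: "deriv (Psi_U \<rho>) (zeta_minus \<rho> v) = - \<rho> v / (1 - \<rho> v)"
    using DERIV_imp_deriv[OF Psi_U_has_deriv[OF zeta_minus_pos]]
    by (simp add: Psi_deriv_def zeta_minus_inv_zeta_minus)
  show "Phi_U (Psi_U \<rho>) v = \<rho> v"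
    unfolding Phi_U_def Let_def G_inv deriv_eq using Y_bounds[of v] by (simp add: field_simps)
qed

end

subsection \<open>From \<open>X_U\<close> to \<open>Y_U\<close>\<close>

context
  fixes \<psi> :: "real \<Rightarrow> real"
  assumes X: "\<psi> \<in> X_U"
begin

text \<open>The derivative postulated in \<open>X_U\<close> is necessarily \<open>deriv \<psi>\<close>, which is the one
  occurring in the definition of \<open>\<Phi>_U\<close>.\<close>

lemma X_deriv: "u > 0 \<Longrightarrow> DERIV \<psi> u :> deriv \<psi> u"
  and X_deriv_cont: "continuous_on {0<..} (deriv \<psi>)"
  and X_deriv_neg: "u > 0 \<Longrightarrow> deriv \<psi> u < 0"
proof -
  obtain d where d: "\<And>u. u > 0 \<Longrightarrow> DERIV \<psi> u :> d u" "continuous_on {0<..} d"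
    "\<And>u. u > 0 \<Longrightarrow> d u < 0"
    using X by (auto simp: X_U_def)
  have eq: "deriv \<psi> u = d u" if "u > 0" for u using DERIV_imp_deriv[OF d(1)[OF that]] .
  show "u > 0 \<Longrightarrow> DERIV \<psi> u :> deriv \<psi> u" "u > 0 \<Longrightarrow> deriv \<psi> u < 0"
    using d eq by auto
  have "continuous_on {0<..} (deriv \<psi>) \<longleftrightarrow> continuous_on {0<..} d"
    by (rule continuous_on_cong) (auto simp: eq)
  with d(2) show "continuous_on {0<..} (deriv \<psi>)" by simp
qed

lemma X_at_right_0: "filterlim \<psi> at_top (at_right 0)"
  and X_at_top: "(\<psi> \<longlongrightarrow> 0) at_top"
  and X_nonpos: "u \<le> 0 \<Longrightarrow> \<psi> u = 0"
  using X by (auto simp: X_U_def)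

lemma G_deriv: "u > 0 \<Longrightarrow> DERIV (G \<psi>) u :> 1 - deriv \<psi> u"
  unfolding G_def[abs_def] by (intro derivative_intros X_deriv)

lemma G_isCont: "u > 0 \<Longrightarrow> isCont (G \<psi>) u"
  using G_deriv by (rule DERIV_isCont)

lemma G_strict_mono: "0 < a \<Longrightarrow> a < b \<Longrightarrow> G \<psi> a < G \<psi> b"
proof (rule DERIV_pos_imp_increasing[where f="G \<psi>"])
  fix x assume "0 < a" "a \<le> x"
  then show "\<exists>y. DERIV (G \<psi>) x :> y \<and> y > 0"
    using G_deriv[of x] X_deriv_neg[of x] by (intro exI[of _ "1 - deriv \<psi> x"]) simp
qed

lemma G_le_iff: "0 < a \<Longrightarrow> 0 < b \<Longrightarrow> G \<psi> a \<le> G \<psi> b \<longleftrightarrow> a \<le> b"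
  using G_strict_mono[of a b] G_strict_mono[of b a] by (cases a b rule: linorder_cases) auto

text \<open>\<open>G\<close> runs from \<open>-\<infinity>\<close> (as \<open>\<psi>\<close> blows up at \<open>0\<close>) to \<open>+\<infinity>\<close> (as \<open>\<psi>\<close> vanishes at \<open>\<infinity>\<close>).\<close>

lemma G_at_right_0: "filterlim (G \<psi>) at_bot (at_right 0)"
proof -
  have "filterlim (\<lambda>u. - \<psi> u) at_bot (at_right 0)"
    using X_at_right_0 by (simp add: filterlim_uminus_at_top)
  then have "filterlim (\<lambda>u. u + - \<psi> u) at_bot (at_right 0)"
    using filterlim_tendsto_add_at_bot_iff[of "\<lambda>u::real. u" 0 "at_right 0" "\<lambda>u. - \<psi> u"]
    by (simp add: tendsto_ident_at)
  then show ?thesis by (simp add: G_def[abs_def])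
qed

lemma G_at_top: "filterlim (G \<psi>) at_top at_top"
proof -
  have "((\<lambda>u. - \<psi> u) \<longlongrightarrow> - 0) at_top" by (intro tendsto_intros X_at_top)
  then have "filterlim (\<lambda>u. - \<psi> u + u) at_top at_top"
    by (rule filterlim_tendsto_add_at_top) (rule filterlim_ident)
  then show ?thesis by (simp add: G_def[abs_def])
qed

lemma G_bij: "bij_betw (G \<psi>) {0<..} UNIV"
  unfolding bij_betw_def
proof (intro conjI)
  show "inj_on (G \<psi>) {0<..}"
    by (rule inj_onI) (metis G_strict_mono greaterThan_iff less_irrefl linorder_neqE)
  have "y \<in> G \<psi> ` {0<..}" for y
  proof -
    have "eventually (\<lambda>u. G \<psi> u < y) (at_right 0)"
      using G_at_right_0 by (simp add: filterlim_at_bot_dense)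
    then obtain b where b: "b > 0" "\<And>u. 0 < u \<Longrightarrow> u < b \<Longrightarrow> G \<psi> u < y"
      by (auto simp: eventually_at_right_field)
    define a where "a = b / 2"
    have a: "a > 0" "G \<psi> a < y" using b by (auto simp: a_def)
    have "eventually (\<lambda>u. G \<psi> u > y) at_top"
      using G_at_top by (simp add: filterlim_at_top_dense)
    then obtain N where N: "\<And>n. n \<ge> N \<Longrightarrow> G \<psi> n > y"
      by (auto simp: eventually_at_top_linorder)
    define c where "c = max N a"
    have c: "a \<le> c" "G \<psi> c > y" using N by (auto simp: c_def)
    obtain x where "a \<le> x" "x \<le> c" "G \<psi> x = y"
      using IVT[of "G \<psi>" a y c] a c G_isCont by force
    then show "y \<in> G \<psi> ` {0<..}" using a by force
  qed
  then show "G \<psi> ` {0<..} = UNIV" by auto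
qed

text \<open>The inverse \<open>h = G\<^sup>-\<^sup>1 : \<real> \<rightarrow> (0,\<infinity>)\<close>; it will turn out to be \<open>\<zeta>\<^sup>-\<close> of \<open>\<Phi>(\<psi>)\<close>.\<close>

definition G_inv :: "real \<Rightarrow> real" where
  "G_inv = the_inv_into {0<..} (G \<psi>)"

lemma G_inv_bij: "bij_betw G_inv UNIV {0<..}"
  unfolding G_inv_def by (rule bij_betw_the_inv_into[OF G_bij])

lemma G_inv_pos: "G_inv v > 0"
  using G_inv_bij by (auto simp: bij_betw_def)

lemma G_G_inv: "G \<psi> (G_inv v) = v"
  unfolding G_inv_def using G_bij by (intro f_the_inv_into_f) (auto simp: bij_betw_def)

lemma G_inv_G: "u > 0 \<Longrightarrow> G_inv (G \<psi> u) = u"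
  unfolding G_inv_def using G_bij by (intro the_inv_into_f_f) (auto simp: bij_betw_def)

lemma G_inv_isCont: "isCont G_inv v"
proof -
  have near_pos: "z > 0" if "\<bar>z - G_inv v\<bar> \<le> G_inv v / 2" for z
    using that G_inv_pos[of v] by linarith
  have "isCont G_inv (G \<psi> (G_inv v))"
  proof (rule isCont_inverse_function[of "G_inv v / 2" "G_inv v" G_inv "G \<psi>"])
    show "0 < G_inv v / 2" using G_inv_pos by simp
    show "G_inv (G \<psi> z) = z" if "\<bar>z - G_inv v\<bar> \<le> G_inv v / 2" for z
      using G_inv_G[OF near_pos[OF that]] .
    show "isCont (G \<psi>) z" if "\<bar>z - G_inv v\<bar> \<le> G_inv v / 2" for z
      using G_isCont[OF near_pos[OF that]] .
  qed
  then show ?thesis by (simp add: G_G_inv)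
qed

lemma G_inv_deriv: "DERIV G_inv v :> inverse (1 - deriv \<psi> (G_inv v))"
  by (rule DERIV_inverse_function[where f="G \<psi>" and a="v - 1" and b="v + 1"])
     (use G_deriv[OF G_inv_pos] X_deriv_neg[OF G_inv_pos[of v]] G_G_inv G_inv_isCont in auto)

lemma G_inv_at_bot: "(G_inv \<longlongrightarrow> 0) at_bot"
proof (rule order_tendstoI)
  fix a :: real assume "a < 0"
  then show "eventually (\<lambda>v. a < G_inv v) at_bot"
    using G_inv_pos by (auto intro: always_eventually less_trans)
next
  fix a :: real assume a: "0 < a"
  show "eventually (\<lambda>v. G_inv v < a) at_bot"
    using eventually_le_at_bot[of "G \<psi> a - 1"]
  proof eventually_elim
    case (elim v)
    show ?case
    proof (rule ccontr)
      assume "\<not> G_inv v < a"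
      then have "G \<psi> a \<le> G \<psi> (G_inv v)" using G_le_iff[OF a G_inv_pos] by simp
      with elim show False by (simp add: G_G_inv)
    qed
  qed
qed

lemma G_inv_at_top: "filterlim G_inv at_top at_top"
  unfolding filterlim_at_top
proof
  fix Z :: real
  have pos: "max Z 1 > 0" by simp
  show "eventually (\<lambda>v. Z \<le> G_inv v) at_top"
    using eventually_ge_at_top[of "G \<psi> (max Z 1)"]
  proof eventually_elim
    case (elim v)
    then have "max Z 1 \<le> G_inv v" using G_le_iff[OF pos G_inv_pos] by (simp add: G_G_inv)
    then show ?case by simp
  qed
qed

lemma Phi_U_eq: "Phi_U \<psi> v = - deriv \<psi> (G_inv v) / (1 - deriv \<psi> (G_inv v))"
  by (simp add: Phi_U_def Let_def G_inv_def)

lemma Phi_U_bounds: "0 < Phi_U \<psi> v" "Phi_U \<psi> v < 1"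
  using X_deriv_neg[OF G_inv_pos[of v]] by (simp_all add: Phi_U_eq field_simps)

lemma one_minus_Phi_U: "1 - Phi_U \<psi> v = inverse (1 - deriv \<psi> (G_inv v))"
  using X_deriv_neg[OF G_inv_pos[of v]] by (simp add: Phi_U_eq field_simps)

lemma Phi_U_cont: "continuous_on UNIV (Phi_U \<psi>)"
proof -
  have "continuous_on UNIV G_inv"
    by (intro continuous_at_imp_continuous_on ballI G_inv_isCont)
  then have "continuous_on UNIV (\<lambda>v. deriv \<psi> (G_inv v))"
    by (rule continuous_on_compose2[OF X_deriv_cont]) (auto intro: G_inv_pos)
  moreover have "1 - deriv \<psi> (G_inv v) \<noteq> 0" for v
    using X_deriv_neg[OF G_inv_pos[of v]] by simp
  ultimately show ?thesis
    unfolding Phi_U_eq[abs_def] by (intro continuous_intros) auto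
qed

lemma psi_G_inv_deriv: "DERIV (\<lambda>x. - \<psi> (G_inv x)) v :> Phi_U \<psi> v"
proof -
  have "DERIV (\<lambda>x. - \<psi> (G_inv x)) v :> - (deriv \<psi> (G_inv v) * inverse (1 - deriv \<psi> (G_inv v)))"
    by (intro DERIV_minus DERIV_chain2[OF X_deriv[OF G_inv_pos] G_inv_deriv])
  then show ?thesis by (simp add: Phi_U_eq divide_inverse)
qed

lemma integral_Iic_one_minus_Phi_U:
  shows "set_integrable lborel {..v} (\<lambda>x. 1 - Phi_U \<psi> x)"
    and "(LINT x:{..v}|lborel. 1 - Phi_U \<psi> x) = G_inv v"
proof -
  have "continuous_on UNIV (\<lambda>x. 1 - Phi_U \<psi> x)" using Phi_U_cont by (intro continuous_intros)
  moreover have "DERIV G_inv x :> 1 - Phi_U \<psi> x" for x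
    using G_inv_deriv by (simp add: one_minus_Phi_U)
  moreover have "0 \<le> 1 - Phi_U \<psi> x" for x using Phi_U_bounds(2)[of x] by simp
  moreover have "(G_inv \<longlongrightarrow> G_inv v) (at_left v)"
    using G_inv_isCont[of v] by (simp add: isCont_def filterlim_at_split)
  ultimately show "set_integrable lborel {..v} (\<lambda>x. 1 - Phi_U \<psi> x)"
    and "(LINT x:{..v}|lborel. 1 - Phi_U \<psi> x) = G_inv v"
    using FTC_Iic_nonneg[where F=G_inv and A=0, OF _ _ _ G_inv_at_bot] by simp_all
qed

lemma integral_Ici_Phi_U:
  shows "set_integrable lborel {v..} (Phi_U \<psi>)"
    and "(LINT x:{v..}|lborel. Phi_U \<psi> x) = \<psi> (G_inv v)"
proof -
  have "((\<lambda>x. - \<psi> (G_inv x)) \<longlongrightarrow> - 0) at_top"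
    by (intro tendsto_minus filterlim_compose[OF X_at_top G_inv_at_top])
  moreover have "0 \<le> Phi_U \<psi> x" for x using Phi_U_bounds(1)[of x] by simp
  moreover have "((\<lambda>x. - \<psi> (G_inv x)) \<longlongrightarrow> - \<psi> (G_inv v)) (at_right v)"
    using DERIV_isCont[OF psi_G_inv_deriv] by (simp add: isCont_def filterlim_at_split)
  ultimately show "set_integrable lborel {v..} (Phi_U \<psi>)"
    and "(LINT x:{v..}|lborel. Phi_U \<psi> x) = \<psi> (G_inv v)"
    using FTC_Ici_nonneg[where F="\<lambda>x. - \<psi> (G_inv x)", OF Phi_U_cont psi_G_inv_deriv]
    by simp_all
qed

text \<open>The balance condition of \<open>Y_U\<close> at \<open>0\<close> is \<open>h(0) = \<psi>(h(0))\<close>, i.e. \<open>G(h(0)) = 0\<close>.\<close>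

lemma Phi_U_in_Y: "Phi_U \<psi> \<in> Y_U"
proof -
  have "G_inv 0 = \<psi> (G_inv 0)" using G_G_inv[of 0] by (simp add: G_def)
  then show ?thesis unfolding Y_U_def
    using Phi_U_cont Phi_U_bounds integral_Iic_one_minus_Phi_U[of 0] integral_Ici_Phi_U[of 0]
    by auto
qed

lemma Psi_U_Phi_U: "Psi_U (Phi_U \<psi>) = \<psi>"
proof
  fix u
  have zeta_minus: "zeta_minus (Phi_U \<psi>) = G_inv"
    using integral_Iic_one_minus_Phi_U by (simp add: zeta_minus_def fun_eq_iff)
  have zeta_plus: "zeta_plus (Phi_U \<psi>) v = \<psi> (G_inv v)" for v
    using integral_Ici_Phi_U by (simp add: zeta_plus_def)
  show "Psi_U (Phi_U \<psi>) u = \<psi> u"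
  proof (cases "u > 0")
    case True
    have "the_inv_into UNIV G_inv u = G \<psi> u"
      using G_inv_bij True G_inv_G by (intro the_inv_into_f_eq) (auto simp: bij_betw_def)
    then show ?thesis using True by (simp add: Psi_U_def zeta_minus zeta_plus G_inv_G)
  next
    case False then show ?thesis by (simp add: Psi_U_def X_nonpos)
  qed
qed

end

theorem proposition4p4:
  shows "(\<forall>\<psi>\<in>X_U. bij_betw (G \<psi>) {0<..} UNIV)
       \<and> (\<forall>\<rho>\<in>Y_U. bij_betw (zeta_minus \<rho>) UNIV {0<..} \<and> bij_betw (zeta_plus \<rho>) UNIV {0<..})
       \<and> bij_betw Phi_U X_U Y_U
       \<and> (\<forall>\<rho>\<in>Y_U. Psi_U \<rho> \<in> X_U \<and> Phi_U (Psi_U \<rho>) = \<rho>)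
       \<and> (\<forall>\<psi>\<in>X_U. Psi_U (Phi_U \<psi>) = \<psi>)"
proof (intro conjI ballI)
  show "bij_betw (G \<psi>) {0<..} UNIV" if "\<psi> \<in> X_U" for \<psi> using G_bij[OF that] .
  show "bij_betw (zeta_minus \<rho>) UNIV {0<..}" if "\<rho> \<in> Y_U" for \<rho> using zeta_minus_bij[OF that] .
  show "bij_betw (zeta_plus \<rho>) UNIV {0<..}" if "\<rho> \<in> Y_U" for \<rho> using zeta_plus_bij[OF that] .
  show "Psi_U \<rho> \<in> X_U" if "\<rho> \<in> Y_U" for \<rho> using Psi_U_in_X[OF that] .
  show "Phi_U (Psi_U \<rho>) = \<rho>" if "\<rho> \<in> Y_U" for \<rho> using Phi_U_Psi_U[OF that] .
  show "Psi_U (Phi_U \<psi>) = \<psi>" if "\<psi> \<in> X_U" for \<psi> using Psi_U_Phi_U[OF that] .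
  show "bij_betw Phi_U X_U Y_U"
    by (rule bij_betw_byWitness[where f'=Psi_U])
       (auto intro: Psi_U_Phi_U Phi_U_Psi_U Phi_U_in_Y Psi_U_in_X)
qed

end
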